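(* Let $G$ be a digraph and $f$ a discrete Morse function on $G$, and let $\gamma$ be an allowed elementary $n$-path in $G$. Then the following two conditions cannot both hold: (i'') there exists an allowed elementary $(n-1)$-path $\beta<\gamma$ with $f(\beta)=f(\gamma)$; (ii'') there exists an allowed elementary $(n+1)$-path $\alpha>\gamma$ with $f(\alpha)=f(\gamma)$.
   Context: A digraph $G=(V,E)$ consists of a set $V$ and $E\subseteq(V\times V)\setminus\{(v,v)\}$; $(u,v)\in E$ is written $u\to v$. An allowed elementary $n$-path is a sequence $v_0\cdots v_n$ of vertices with $v_{i-1}\to v_i\in E$ for $1\le i\le n$. For allowed elementary paths, $\gamma'<\gamma$ (or $\gamma>\gamma'$) means $\gamma'$ is obtained from $\gamma$ by deleting some entries. A map $f:V\to[0,+\infty)$ is a discrete Morse function on $G$ if for every allowed elementary path $v_0\cdots v_n$: (i) there is at most one index $i$ with $f(v_i)=0$ such that $v_0\cdots v_{i-1}v_{i+1}\cdots v_n$ is an allowed elementary $(n-1)$-path; (ii) there is at most one vertex $u$ with $f(u)=0$ such that for some $-1\le j\le n$ the sequence $v_0\cdots v_juv_{j+1}\cdots v_n$ (meaning $uv_0\cdots v_n$ if $j=-1$, $v_0\cdots v_nu$ if $j=n$) is an allowed elementary $(n+1)$-path. Set $f(v_0\cdots v_n)=\sum_if(v_i)$. *)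

theory Defs
  imports Complex_Main "HOL-Library.Sublist"
begin

definition digraph :: "'a set \<Rightarrow> ('a \<times> 'a) set \<Rightarrow> bool" where
  "digraph V E \<longleftrightarrow> E \<subseteq> V \<times> V \<and> (\<forall>v. (v, v) \<notin> E)"

text \<open>An allowed elementary path v_0 ... v_n, represented as the nonempty list
  [v_0, ..., v_n]; it is an n-path iff its length is n+1.\<close>
definition allowed_path :: "'a set \<Rightarrow> ('a \<times> 'a) set \<Rightarrow> 'a list \<Rightarrow> bool" where
  "allowed_path V E p \<longleftrightarrow> p \<noteq> [] \<and> set p \<subseteq> V \<and>
     (\<forall>i. Suc i < length p \<longrightarrow> (p ! i, p ! Suc i) \<in> E)"

definition allowed_n_path :: "'a set \<Rightarrow> ('a \<times> 'a) set \<Rightarrow> nat \<Rightarrow> 'a list \<Rightarrow> bool" where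
  "allowed_n_path V E n p \<longleftrightarrow> allowed_path V E p \<and> length p = Suc n"

definition path_val :: "('a \<Rightarrow> real) \<Rightarrow> 'a list \<Rightarrow> real" where
  "path_val f p = sum_list (map f p)"

text \<open>Discrete Morse function on G = (V,E).  Deleting entry i of p is
  take i p @ drop (Suc i) p; inserting u at position j (0..length p) is
  take j p @ u # drop j p.\<close>
definition discrete_morse :: "'a set \<Rightarrow> ('a \<times> 'a) set \<Rightarrow> ('a \<Rightarrow> real) \<Rightarrow> bool" where
  "discrete_morse V E f \<longleftrightarrow>
     (\<forall>v\<in>V. f v \<ge> 0) \<and>
     (\<forall>p. allowed_path V E p \<longrightarrow>
        (\<forall>i i'. i < length p \<and> f (p ! i) = 0 \<and> allowed_path V E (take i p @ drop (Suc i) p) \<and>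
                i' < length p \<and> f (p ! i') = 0 \<and> allowed_path V E (take i' p @ drop (Suc i') p)
                \<longrightarrow> i = i') \<and>
        (\<forall>u u'. u \<in> V \<and> f u = 0 \<and> (\<exists>j\<le>length p. allowed_path V E (take j p @ u # drop j p)) \<and>
                u' \<in> V \<and> f u' = 0 \<and> (\<exists>j\<le>length p. allowed_path V E (take j p @ u' # drop j p))
                \<longrightarrow> u = u'))"

end

theory Submission
  imports Defs
begin

text \<open>
  Let \<open>\<beta> < \<gamma> < \<alpha>\<close> with \<open>f(\<beta>) = f(\<gamma>) = f(\<alpha>)\<close>. Then \<open>\<gamma>\<close> is \<open>\<beta>\<close> with one vertex \<open>v\<close> inserted and
  \<open>\<alpha>\<close> is \<open>\<gamma>\<close> with one vertex \<open>u\<close> inserted, and comparing values gives \<open>f(u) = f(v) = 0\<close>.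
  So \<open>\<alpha>\<close> contains two zero-valued entries whose joint deletion leaves the allowed path \<open>\<beta>\<close>.
  If they are adjacent in \<open>\<alpha>\<close>, the 1-path they form has two deletable zero entries.
  Otherwise deleting either one of them from \<open>\<alpha>\<close> leaves an allowed path, because the edge
  bridging the gap is an edge of \<open>\<beta>\<close>. Both contradict condition (i) of a discrete Morse
  function.
\<close>

lemma allowed_path_iff_successively:
  "allowed_path V E p \<longleftrightarrow> p \<noteq> [] \<and> set p \<subseteq> V \<and> successively (\<lambda>x y. (x, y) \<in> E) p"
  unfolding allowed_path_def successively_conv_nth by simp

lemma subseq_length_Suc_deletion:
  assumes "subseq xs ys" and "length ys = Suc (length xs)"
  shows "\<exists>a v b. ys = a @ v # b \<and> xs = a @ b"
  using assms
proof (induction ys arbitrary: xs rule: list.induct)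
  case Nil
  then show ?case by simp
next
  case (Cons y ys)
  show ?case
  proof (cases "xs = ys")
    case True
    then show ?thesis by blast
  next
    case False
    have "\<not> subseq xs ys"
      using False Cons.prems(2) subseq_same_length by fastforce
    then obtain xs' where xs: "xs = y # xs'" "subseq xs' ys"
      using Cons.prems(1) by (cases xs) (auto split: if_splits)
    moreover have "length ys = Suc (length xs')"
      using xs(1) Cons.prems(2) by simp
    ultimately obtain a v b where "ys = a @ v # b" "xs' = a @ b"
      using Cons.IH by blast
    with xs show ?thesis by (metis append_Cons)
  qed
qed

lemma path_val_insert: "path_val f (a @ v # b) = path_val f (a @ b) + f v"
  by (simp add: path_val_def)

lemma allowed_path_delete_inner:
  assumes "allowed_path V E (l @ x # m @ y # r)" and "allowed_path V E (l @ m @ r)" and "m \<noteq> []"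
  shows "allowed_path V E (l @ m @ y # r)" and "allowed_path V E (l @ x # m @ r)"
  using assms
  by (auto simp: allowed_path_iff_successively successively_append_iff successively_Cons hd_append)

lemma discrete_morse_unique_zero_deletion:
  assumes "discrete_morse V E f" and "allowed_path V E (a @ v # b)" and "a @ v # b = c @ w # d"
    and "f v = 0" and "f w = 0" and "allowed_path V E (a @ b)" and "allowed_path V E (c @ d)"
  shows "a = c"
proof -
  let ?p = "a @ v # b"
  have unique: "i = i'"
    if "i < length ?p" "f (?p ! i) = 0" "allowed_path V E (take i ?p @ drop (Suc i) ?p)"
      "i' < length ?p" "f (?p ! i') = 0" "allowed_path V E (take i' ?p @ drop (Suc i') ?p)" for i i'
    using assms(1,2) that unfolding discrete_morse_def by blast
  have at_a: "length a < length ?p" "?p ! length a = v" "take (length a) ?p @ drop (Suc (length a)) ?p = a @ b"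
    by simp_all
  have at_c: "length c < length ?p" "?p ! length c = w" "take (length c) ?p @ drop (Suc (length c)) ?p = c @ d"
    unfolding assms(3) by simp_all
  have "length a = length c"
    using unique[of "length a" "length c"] at_a at_c assms(4-7) by simp
  with assms(3) show "a = c" by simp
qed

lemma discrete_morse_no_adjacent_zeros:
  assumes "discrete_morse V E f" and "(x, y) \<in> E" and "x \<in> V" and "y \<in> V"
  shows "\<not> (f x = 0 \<and> f y = 0)"
proof
  assume zeros: "f x = 0 \<and> f y = 0"
  have "[] = [x]"
    by (rule discrete_morse_unique_zero_deletion[OF assms(1), of "[]" x "[y]" "[x]" y "[]"])
      (use assms zeros in \<open>simp_all add: allowed_path_iff_successively\<close>)
  then show False by simp
qed

lemma discrete_morse_delete_two_zeros_not_allowed: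
  assumes "discrete_morse V E f" and "allowed_path V E (l @ x # m @ y # r)"
    and "f x = 0" and "f y = 0"
  shows "\<not> allowed_path V E (l @ m @ r)"
proof
  assume deleted: "allowed_path V E (l @ m @ r)"
  show False
  proof (cases "m = []")
    case True
    with assms(2) have "successively (\<lambda>a b. (a, b) \<in> E) (l @ x # y # r)" "set (l @ x # y # r) \<subseteq> V"
      unfolding allowed_path_iff_successively by simp_all
    then have "(x, y) \<in> E" "x \<in> V" "y \<in> V"
      unfolding successively_append_iff by simp_all
    from discrete_morse_no_adjacent_zeros[OF assms(1) this] assms(3,4) show False
      by simp
  next
    case False
    have "l = l @ x # m"
      by (rule discrete_morse_unique_zero_deletion[of V E f l x "m @ y # r" "l @ x # m" y r])
        (use assms allowed_path_delete_inner[OF assms(2) deleted False] in simp_all)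
    then show False by simp
  qed
qed

lemma insert_delete_split:
  assumes "as @ bs = xs @ v # ys"
  obtains l x m y r
  where "as @ u # bs = l @ x # m @ y # r" and "xs @ ys = l @ m @ r" and "{x, y} = {u, v}"
proof -
  obtain us where "as = xs @ us \<and> us @ bs = v # ys \<or> as @ us = xs \<and> bs = us @ v # ys"
    using assms append_eq_append_conv2[of as bs xs "v # ys"] by blast
  then show thesis
  proof
    assume "as = xs @ us \<and> us @ bs = v # ys"
    then consider "as = xs" "bs = v # ys" | m where "as = xs @ v # m" "ys = m @ bs"
      by (cases us) auto
    then show thesis
    proof cases
      case 1
      then show thesis using that[of xs u "[]" v ys] by simp
    next
      case (2 m)
      then show thesis using that[of xs v m u bs] by auto
    qed
  next
    assume "as @ us = xs \<and> bs = us @ v # ys"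
    then show thesis
      using that[of as u us v ys] by auto
  qed
qed

theorem lemma4p4:
  fixes V :: "'a set" and E :: "('a \<times> 'a) set" and f :: "'a \<Rightarrow> real"
    and n :: nat and \<gamma> :: "'a list"
  assumes "digraph V E"
    and "discrete_morse V E f"
    and "allowed_n_path V E n \<gamma>"
  shows "\<not> ((\<exists>\<beta>. allowed_n_path V E (n - 1) \<beta> \<and> length \<beta> = n \<and> strict_subseq \<beta> \<gamma>
                 \<and> path_val f \<beta> = path_val f \<gamma>) \<and>
            (\<exists>\<alpha>. allowed_n_path V E (Suc n) \<alpha> \<and> strict_subseq \<gamma> \<alpha>
                 \<and> path_val f \<alpha> = path_val f \<gamma>))"
proof
  assume "(\<exists>\<beta>. allowed_n_path V E (n - 1) \<beta> \<and> length \<beta> = n \<and> strict_subseq \<beta> \<gamma>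
                 \<and> path_val f \<beta> = path_val f \<gamma>) \<and>
            (\<exists>\<alpha>. allowed_n_path V E (Suc n) \<alpha> \<and> strict_subseq \<gamma> \<alpha>
                 \<and> path_val f \<alpha> = path_val f \<gamma>)"
  then obtain \<beta> \<alpha>
    where \<beta>: "allowed_path V E \<beta>" "length \<beta> = n" "subseq \<beta> \<gamma>" "path_val f \<beta> = path_val f \<gamma>"
      and \<alpha>: "allowed_path V E \<alpha>" "length \<alpha> = Suc (Suc n)" "subseq \<gamma> \<alpha>" "path_val f \<alpha> = path_val f \<gamma>"
    unfolding allowed_n_path_def strict_subseq_def by auto
  have "length \<gamma> = Suc n"
    using assms(3) unfolding allowed_n_path_def by simp
  then obtain xs v ys where \<beta>\<gamma>: "\<gamma> = xs @ v # ys" "\<beta> = xs @ ys"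
    using subseq_length_Suc_deletion[OF \<beta>(3)] \<beta>(2) by auto
  obtain as u bs where \<gamma>\<alpha>: "\<alpha> = as @ u # bs" "\<gamma> = as @ bs"
    using subseq_length_Suc_deletion[OF \<alpha>(3)] \<alpha>(2) \<open>length \<gamma> = Suc n\<close> by auto
  have "as @ bs = xs @ v # ys"
    using \<beta>\<gamma>(1) \<gamma>\<alpha>(2) by simp
  then obtain l x m y r
    where split: "\<alpha> = l @ x # m @ y # r" "\<beta> = l @ m @ r" "{x, y} = {u, v}"
    unfolding \<beta>\<gamma>(2) \<gamma>\<alpha>(1) by (rule insert_delete_split)
  have "f v = 0"
    using \<beta>(4) unfolding \<beta>\<gamma> path_val_insert by simp
  moreover have "f u = 0"
    using \<alpha>(4) unfolding \<gamma>\<alpha> path_val_insert by simp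
  ultimately have "f x = 0" "f y = 0"
    using split(3) by (auto simp: doubleton_eq_iff)
  from discrete_morse_delete_two_zeros_not_allowed[OF assms(2) _ this] \<alpha>(1) \<beta>(1)
  show False
    unfolding split by simp
qed

end
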